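(* Let $A=\sum\{A_{ij}\mid i,j\in I\}$ be a generalized matrix ring having left and right gm non-zero divisors. Then $r_n(A)=\mathrm{g.m.}\,r_n(A)=\sum\{r_n(A_{ij})\mid i,j\in I\}$.
   Context: A generalized matrix (gm) ring: $I$ is a nonempty index set; for $i,j\in I$, $A_{ij}$ are additive groups with biadditive associative maps $A_{ij}\times A_{jl}\to A_{il}$. $A$ is the external direct sum of the $A_{ij}$ with $(xy)_{ij}=\sum_k x_{ik}y_{kj}$. A gm ideal is an ideal $B$ of $A$ with $B=\sum\{B_{ij}\}$, $B_{ij}\subseteq A_{ij}$. For a radical $r$, $\mathrm{g.m.}\,r(A)$ denotes the largest gm ideal of $A$ contained in $r(A)$. Each $A_{ij}$ is regarded as a $\Gamma$-ring with $\Gamma=A_{ji}$: an ideal is an additive subgroup $B\subseteq A_{ij}$ with $A_{ij}A_{ji}B\subseteq B$, $BA_{ji}A_{ij}\subseteq B$; $x\in A_{ij}$ is von Neumann regular if $x=xyx$ for some $y\in A_{ji}$; $r_n(A_{ij})$ is the largest ideal consisting of von Neumann regular elements. $r_n(A)$ is the largest ideal of the ring $A$ consisting of von Neumann regular elements. $A$ has left and right gm non-zero divisors means: for all $s,t\in I$ there is $0\neq d_{st}\in A_{st}$ with $xd_{st}\neq0$ and $d_{st}y\neq0$ for all $i,j\in I$ and all nonzero $x\in A_{is}$, $y\in A_{tj}$. *)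

theory Defs
  imports Main
begin

text \<open>Each group A_ij is
modelled as an additive subgroup C i j of a common abelian group 'a (every family of
abelian groups embeds in their direct sum, so no generality is lost). The maps
A_ij x A_jl -> A_il are m i j l.\<close>

definition gm_ring :: "('i \<Rightarrow> 'i \<Rightarrow> 'a::ab_group_add set) \<Rightarrow> ('i \<Rightarrow> 'i \<Rightarrow> 'i \<Rightarrow> 'a \<Rightarrow> 'a \<Rightarrow> 'a) \<Rightarrow> bool" where
  "gm_ring C m \<longleftrightarrow>
     (\<forall>i j. 0 \<in> C i j \<and> (\<forall>x\<in>C i j. \<forall>y\<in>C i j. x - y \<in> C i j)) \<and>
     (\<forall>i j l. \<forall>x\<in>C i j. \<forall>y\<in>C j l. m i j l x y \<in> C i l) \<and>
     (\<forall>i j l. \<forall>x\<in>C i j. \<forall>x'\<in>C i j. \<forall>y\<in>C j l. m i j l (x + x') y = m i j l x y + m i j l x' y) \<and>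
     (\<forall>i j l. \<forall>x\<in>C i j. \<forall>y\<in>C j l. \<forall>y'\<in>C j l. m i j l x (y + y') = m i j l x y + m i j l x y') \<and>
     (\<forall>i j k l. \<forall>x\<in>C i j. \<forall>y\<in>C j k. \<forall>z\<in>C k l.
        m i k l (m i j k x y) z = m i j l x (m j k l y z))"

definition gm_carrier :: "('i \<Rightarrow> 'i \<Rightarrow> 'a::ab_group_add set) \<Rightarrow> ('i \<Rightarrow> 'i \<Rightarrow> 'a) set" where
  "gm_carrier C = {x. finite {(i, j). x i j \<noteq> 0} \<and> (\<forall>i j. x i j \<in> C i j)}"

definition gm_mult :: "('i \<Rightarrow> 'i \<Rightarrow> 'i \<Rightarrow> 'a \<Rightarrow> 'a \<Rightarrow> 'a::ab_group_add)
    \<Rightarrow> ('i \<Rightarrow> 'i \<Rightarrow> 'a) \<Rightarrow> ('i \<Rightarrow> 'i \<Rightarrow> 'a) \<Rightarrow> ('i \<Rightarrow> 'i \<Rightarrow> 'a)" where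
  "gm_mult m x y = (\<lambda>i j. \<Sum>k\<in>{k. x i k \<noteq> 0}. m i k j (x i k) (y k j))"

definition gm_ideal_of :: "('i \<Rightarrow> 'i \<Rightarrow> 'a::ab_group_add set) \<Rightarrow> ('i \<Rightarrow> 'i \<Rightarrow> 'i \<Rightarrow> 'a \<Rightarrow> 'a \<Rightarrow> 'a)
    \<Rightarrow> ('i \<Rightarrow> 'i \<Rightarrow> 'a) set \<Rightarrow> bool" where
  "gm_ideal_of C m B \<longleftrightarrow> B \<subseteq> gm_carrier C \<and> (\<lambda>i j. 0) \<in> B \<and>
     (\<forall>x\<in>B. \<forall>y\<in>B. (\<lambda>i j. x i j - y i j) \<in> B) \<and>
     (\<forall>a\<in>gm_carrier C. \<forall>x\<in>B. gm_mult m a x \<in> B \<and> gm_mult m x a \<in> B)"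

definition gm_regular :: "('i \<Rightarrow> 'i \<Rightarrow> 'a::ab_group_add set) \<Rightarrow> ('i \<Rightarrow> 'i \<Rightarrow> 'i \<Rightarrow> 'a \<Rightarrow> 'a \<Rightarrow> 'a)
    \<Rightarrow> ('i \<Rightarrow> 'i \<Rightarrow> 'a) \<Rightarrow> bool" where
  "gm_regular C m x \<longleftrightarrow> (\<exists>y\<in>gm_carrier C. x = gm_mult m (gm_mult m x y) x)"

text \<open>r_n(A): the largest ideal of A consisting of von Neumann regular elements,
  realised as the union of all such ideals (which is that largest ideal).\<close>
definition rn_ring :: "('i \<Rightarrow> 'i \<Rightarrow> 'a::ab_group_add set) \<Rightarrow> ('i \<Rightarrow> 'i \<Rightarrow> 'i \<Rightarrow> 'a \<Rightarrow> 'a \<Rightarrow> 'a)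
    \<Rightarrow> ('i \<Rightarrow> 'i \<Rightarrow> 'a) set" where
  "rn_ring C m = \<Union>{B. gm_ideal_of C m B \<and> (\<forall>x\<in>B. gm_regular C m x)}"

definition gm_sum :: "('i \<Rightarrow> 'i \<Rightarrow> 'a::ab_group_add set) \<Rightarrow> ('i \<Rightarrow> 'i \<Rightarrow> 'a) set" where
  "gm_sum Bc = {x. finite {(i, j). x i j \<noteq> 0} \<and> (\<forall>i j. x i j \<in> Bc i j)}"

definition is_gm_ideal :: "('i \<Rightarrow> 'i \<Rightarrow> 'a::ab_group_add set) \<Rightarrow> ('i \<Rightarrow> 'i \<Rightarrow> 'i \<Rightarrow> 'a \<Rightarrow> 'a \<Rightarrow> 'a)
    \<Rightarrow> ('i \<Rightarrow> 'i \<Rightarrow> 'a) set \<Rightarrow> bool" where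
  "is_gm_ideal C m B \<longleftrightarrow> gm_ideal_of C m B \<and>
     (\<exists>Bc. (\<forall>i j. Bc i j \<subseteq> C i j) \<and> B = gm_sum Bc)"

text \<open>g.m. r(A) for a set X: the largest gm ideal contained in X (union of all gm ideals in X).\<close>
definition gm_part :: "('i \<Rightarrow> 'i \<Rightarrow> 'a::ab_group_add set) \<Rightarrow> ('i \<Rightarrow> 'i \<Rightarrow> 'i \<Rightarrow> 'a \<Rightarrow> 'a \<Rightarrow> 'a)
    \<Rightarrow> ('i \<Rightarrow> 'i \<Rightarrow> 'a) set \<Rightarrow> ('i \<Rightarrow> 'i \<Rightarrow> 'a) set" where
  "gm_part C m X = \<Union>{B. is_gm_ideal C m B \<and> B \<subseteq> X}"

text \<open>A_ij as a Gamma-ring with Gamma = A_ji.\<close>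
definition gamma_ideal :: "('i \<Rightarrow> 'i \<Rightarrow> 'a::ab_group_add set) \<Rightarrow> ('i \<Rightarrow> 'i \<Rightarrow> 'i \<Rightarrow> 'a \<Rightarrow> 'a \<Rightarrow> 'a)
    \<Rightarrow> 'i \<Rightarrow> 'i \<Rightarrow> 'a set \<Rightarrow> bool" where
  "gamma_ideal C m i j B \<longleftrightarrow> B \<subseteq> C i j \<and> 0 \<in> B \<and> (\<forall>x\<in>B. \<forall>y\<in>B. x - y \<in> B) \<and>
     (\<forall>a\<in>C i j. \<forall>g\<in>C j i. \<forall>b\<in>B.
        m i i j (m i j i a g) b \<in> B \<and> m i i j (m i j i b g) a \<in> B)"

definition gamma_regular :: "('i \<Rightarrow> 'i \<Rightarrow> 'a::ab_group_add set) \<Rightarrow> ('i \<Rightarrow> 'i \<Rightarrow> 'i \<Rightarrow> 'a \<Rightarrow> 'a \<Rightarrow> 'a)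
    \<Rightarrow> 'i \<Rightarrow> 'i \<Rightarrow> 'a \<Rightarrow> bool" where
  "gamma_regular C m i j x \<longleftrightarrow> (\<exists>y\<in>C j i. x = m i i j (m i j i x y) x)"

definition rn_gamma :: "('i \<Rightarrow> 'i \<Rightarrow> 'a::ab_group_add set) \<Rightarrow> ('i \<Rightarrow> 'i \<Rightarrow> 'i \<Rightarrow> 'a \<Rightarrow> 'a \<Rightarrow> 'a)
    \<Rightarrow> 'i \<Rightarrow> 'i \<Rightarrow> 'a set" where
  "rn_gamma C m i j = \<Union>{B. gamma_ideal C m i j B \<and> (\<forall>x\<in>B. gamma_regular C m i j x)}"

definition has_gm_nonzero_divisors :: "('i \<Rightarrow> 'i \<Rightarrow> 'a::ab_group_add set) \<Rightarrow> ('i \<Rightarrow> 'i \<Rightarrow> 'i \<Rightarrow> 'a \<Rightarrow> 'a \<Rightarrow> 'a) \<Rightarrow> bool" where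
  "has_gm_nonzero_divisors C m \<longleftrightarrow>
     (\<forall>s t. \<exists>d\<in>C s t. d \<noteq> 0 \<and>
        (\<forall>i. \<forall>x\<in>C i s. x \<noteq> 0 \<longrightarrow> m i s t x d \<noteq> 0) \<and>
        (\<forall>j. \<forall>y\<in>C t j. y \<noteq> 0 \<longrightarrow> m s t j d y \<noteq> 0))"

end

theory Submission
  imports Defs "HOL-Library.Function_Algebras"
begin

text \<open>If \<open>x\<close> lies in a regular ideal of \<open>A\<close>, then for all \<open>u \<in> A\<^sub>k\<^sub>s\<close>, \<open>v \<in> A\<^sub>t\<^sub>j\<close> the
  matrix \<open>(u e\<^sub>k\<^sub>s) x (v e\<^sub>t\<^sub>j)\<close> is the single entry \<open>u x\<^sub>s\<^sub>t v\<close>, which is therefore regular; choosing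
  \<open>u, v\<close> to be gm non-zero divisors and cancelling them from an inner inverse shows that \<open>x\<^sub>s\<^sub>t\<close>
  is regular in the \<open>\<Gamma>\<close>-ring \<open>A\<^sub>s\<^sub>t\<close>. Conversely, a regular \<open>\<Gamma>\<close>-ideal \<open>B\<close> of \<open>A\<^sub>k\<^sub>j\<close> determines
  the family \<open>Q\<^sub>s\<^sub>t = {y. A\<^sub>k\<^sub>s y A\<^sub>t\<^sub>j \<subseteq> B}\<close>; the matrices with entries in \<open>Q\<close> form an ideal of \<open>A\<close>
  whose entries are regular by the same cancellation, and such an ideal is regular because one
  entry, and then one row, can be split off at a time by the Brown--McCoy lemma.\<close>

locale nonunital_ring =
  fixes S :: "'b::ab_group_add set" and mul :: "'b \<Rightarrow> 'b \<Rightarrow> 'b"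
  assumes zero_mem: "0 \<in> S"
    and diff_mem: "x \<in> S \<Longrightarrow> y \<in> S \<Longrightarrow> x - y \<in> S"
    and mul_mem: "x \<in> S \<Longrightarrow> y \<in> S \<Longrightarrow> mul x y \<in> S"
    and mul_assoc: "x \<in> S \<Longrightarrow> y \<in> S \<Longrightarrow> z \<in> S \<Longrightarrow> mul (mul x y) z = mul x (mul y z)"
    and add_mul: "x \<in> S \<Longrightarrow> y \<in> S \<Longrightarrow> z \<in> S \<Longrightarrow> mul (x + y) z = mul x z + mul y z"
    and mul_add: "x \<in> S \<Longrightarrow> y \<in> S \<Longrightarrow> z \<in> S \<Longrightarrow> mul x (y + z) = mul x y + mul x z"
begin

lemma add_mem: "x \<in> S \<Longrightarrow> y \<in> S \<Longrightarrow> x + y \<in> S"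
  using diff_mem[of x "- y"] diff_mem[OF zero_mem, of y] by simp

lemma zero_mul: "x \<in> S \<Longrightarrow> mul 0 x = 0"
  using add_mul[OF zero_mem zero_mem, of x] by simp

lemma mul_zero: "x \<in> S \<Longrightarrow> mul x 0 = 0"
  using mul_add[OF _ zero_mem zero_mem, of x] by simp

lemma diff_mul: "x \<in> S \<Longrightarrow> y \<in> S \<Longrightarrow> z \<in> S \<Longrightarrow> mul (x - y) z = mul x z - mul y z"
  using add_mul[of "x - y" y z] diff_mem[of x y] by (simp add: eq_diff_eq)

lemma mul_diff: "x \<in> S \<Longrightarrow> y \<in> S \<Longrightarrow> z \<in> S \<Longrightarrow> mul x (y - z) = mul x y - mul x z"
  using mul_add[of x "y - z" z] diff_mem[of y z] by (simp add: eq_diff_eq)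

lemmas ring_simps = add_mul mul_add diff_mul mul_diff mul_assoc mul_mem diff_mem add_mem

definition regular :: "'b \<Rightarrow> bool" where
  "regular x \<longleftrightarrow> (\<exists>y\<in>S. x = mul (mul x y) x)"

definition ideal :: "'b set \<Rightarrow> bool" where
  "ideal I \<longleftrightarrow> I \<subseteq> S \<and> 0 \<in> I \<and> (\<forall>x\<in>I. \<forall>y\<in>I. x - y \<in> I) \<and>
     (\<forall>a\<in>S. \<forall>x\<in>I. mul a x \<in> I \<and> mul x a \<in> I)"

lemma ideal_add:
  assumes "ideal I" "x \<in> I" "y \<in> I"
  shows "x + y \<in> I"
proof -
  have "x - (0 - y) \<in> I" using assms unfolding ideal_def by blast
  then show ?thesis by simp
qed

definition regular_radical :: "'b set" where
  "regular_radical = \<Union>{I. ideal I \<and> (\<forall>x\<in>I. regular x)}"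

lemma regular_zero: "regular 0"
  unfolding regular_def using zero_mem zero_mul by metis

text \<open>Brown--McCoy: if \<open>x - xzx\<close> is regular with inner inverse \<open>w\<close>, then \<open>x\<close> has the
  inner inverse \<open>z + (1 - zx) w (1 - xz)\<close>, expanded below so that no unit is needed.\<close>
lemma regular_if_regular_diff:
  assumes x: "x \<in> S" and z: "z \<in> S" and reg: "regular (x - mul (mul x z) x)"
  shows "regular x"
proof -
  obtain w where w: "w \<in> S"
    and hw: "x - mul (mul x z) x = mul (mul (x - mul (mul x z) x) w) (x - mul (mul x z) x)"
    using reg unfolding regular_def by blast
  then have expanded: "mul x (mul w x) - mul x (mul w (mul x (mul z x))) - mul x (mul z (mul x (mul w x)))
      + mul x (mul z (mul x (mul w (mul x (mul z x))))) = x - mul x (mul z x)"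
    using x z by (simp add: ring_simps algebra_simps)
  define v where "v = z + w - mul z (mul x w) - mul w (mul x z) + mul z (mul x (mul w (mul x z)))"
  have "v \<in> S" unfolding v_def using x z w by (simp add: ring_simps)
  moreover have "mul (mul x v) x = x"
    unfolding v_def using x z w expanded by (simp add: ring_simps algebra_simps)
  ultimately show ?thesis unfolding regular_def by metis
qed

lemma regular_add_if_left_annihilates:
  assumes "p \<in> S" "q \<in> S" "z \<in> S" "mul (mul p z) p = p" "mul z q = 0"
    and "regular (q - mul (mul q z) p)"
  shows "regular (p + q)"
proof -
  have "mul (mul p z) q = 0" "mul (mul q z) q = 0" using assms(1-5) by (simp_all add: mul_assoc mul_zero)
  then have "p + q - mul (mul (p + q) z) (p + q) = q - mul (mul q z) p"
    using assms(1-4) by (simp add: ring_simps)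
  then show ?thesis using regular_if_regular_diff[of "p + q" z] assms add_mem by metis
qed

lemma regular_add_if_right_annihilates:
  assumes "p \<in> S" "q \<in> S" "z \<in> S" "mul (mul p z) p = p" "mul q z = 0"
    and "regular (q - mul (mul p z) q)"
  shows "regular (p + q)"
proof -
  have "mul (mul q z) p = 0" "mul (mul q z) q = 0" using assms(1-5) by (simp_all add: zero_mul)
  then have "p + q - mul (mul (p + q) z) (p + q) = q - mul (mul p z) q"
    using assms(1-4) by (simp add: ring_simps)
  then show ?thesis using regular_if_regular_diff[of "p + q" z] assms add_mem by metis
qed

lemma ideal_set_plus:
  assumes I: "ideal I" and J: "ideal J"
  shows "ideal {a + b |a b. a \<in> I \<and> b \<in> J}"
  unfolding ideal_def
proof (intro conjI ballI)
  show "{a + b |a b. a \<in> I \<and> b \<in> J} \<subseteq> S" using I J add_mem unfolding ideal_def by blast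
  show "0 \<in> {a + b |a b. a \<in> I \<and> b \<in> J}" using I J unfolding ideal_def by force
next
  fix x y assume "x \<in> {a + b |a b. a \<in> I \<and> b \<in> J}" "y \<in> {a + b |a b. a \<in> I \<and> b \<in> J}"
  then obtain a b a' b' where "x = a + b" "y = a' + b'" "a \<in> I" "b \<in> J" "a' \<in> I" "b' \<in> J" by blast
  moreover have "a - a' \<in> I" "b - b' \<in> J" using calculation I J unfolding ideal_def by blast+
  moreover have "x - y = (a - a') + (b - b')" using calculation by simp
  ultimately show "x - y \<in> {a + b |a b. a \<in> I \<and> b \<in> J}" by blast
next
  fix c x assume c: "c \<in> S" and "x \<in> {a + b |a b. a \<in> I \<and> b \<in> J}"
  then obtain a b where ab: "x = a + b" "a \<in> I" "b \<in> J" by blast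
  then have "a \<in> S" "b \<in> S" using I J unfolding ideal_def by blast+
  then have "mul c x = mul c a + mul c b" "mul x c = mul a c + mul b c"
    using ab c by (simp_all add: add_mul mul_add)
  moreover have "mul c a \<in> I" "mul a c \<in> I" "mul c b \<in> J" "mul b c \<in> J"
    using ab I J c unfolding ideal_def by blast+
  ultimately show "mul c x \<in> {a + b |a b. a \<in> I \<and> b \<in> J}"
    and "mul x c \<in> {a + b |a b. a \<in> I \<and> b \<in> J}" by blast+
qed

lemma regular_add_if_regular_ideals:
  assumes I: "ideal I" "\<forall>x\<in>I. regular x" and J: "ideal J" "\<forall>x\<in>J. regular x"
    and a: "a \<in> I" and b: "b \<in> J"
  shows "regular (a + b)"
proof -
  have aS: "a \<in> S" and bS: "b \<in> S" using a b I J unfolding ideal_def by blast+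
  obtain z where z: "z \<in> S" "a = mul (mul a z) a" using I a unfolding regular_def by blast
  have J_diff: "\<And>u v. u \<in> J \<Longrightarrow> v \<in> J \<Longrightarrow> u - v \<in> J"
    and J_mul: "\<And>c u. c \<in> S \<Longrightarrow> u \<in> J \<Longrightarrow> mul c u \<in> J \<and> mul u c \<in> J"
    using J unfolding ideal_def by auto
  have "a + b - mul (mul (a + b) z) (a + b)
      = b - mul (mul a z) b - mul (mul b z) a - mul (mul b z) b"
    using aS bS z by (simp add: ring_simps algebra_simps)
  also have "\<dots> \<in> J"
    using aS bS z b by (intro J_diff) (simp_all add: J_mul mul_mem)
  finally have "regular (a + b - mul (mul (a + b) z) (a + b))" using J(2) by blast
  then show ?thesis using regular_if_regular_diff aS bS z add_mem by blast
qed

lemma regular_radical_mem_iff: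
  "x \<in> regular_radical \<longleftrightarrow> (\<exists>I. ideal I \<and> (\<forall>x\<in>I. regular x) \<and> x \<in> I)"
  unfolding regular_radical_def by blast

lemma regular_if_in_regular_radical: "x \<in> regular_radical \<Longrightarrow> regular x"
  unfolding regular_radical_mem_iff by blast

lemma ideal_regular_radical: "ideal regular_radical"
  unfolding ideal_def
proof (intro conjI ballI)
  show "regular_radical \<subseteq> S" unfolding regular_radical_def ideal_def by blast
  have "ideal {0}" unfolding ideal_def using zero_mem zero_mul mul_zero by auto
  then show "0 \<in> regular_radical" unfolding regular_radical_mem_iff using regular_zero by blast
next
  fix x y assume "x \<in> regular_radical" "y \<in> regular_radical"
  then obtain I J where I: "ideal I" "\<forall>x\<in>I. regular x" "x \<in> I"
    and J: "ideal J" "\<forall>x\<in>J. regular x" "y \<in> J"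
    unfolding regular_radical_mem_iff by blast
  have "- y \<in> J" using J diff_mem[OF zero_mem] unfolding ideal_def by force
  then have "x - y \<in> {a + b |a b. a \<in> I \<and> b \<in> J}" using I(3) by force
  moreover have "\<forall>z\<in>{a + b |a b. a \<in> I \<and> b \<in> J}. regular z"
    using regular_add_if_regular_ideals[OF I(1,2) J(1,2)] by blast
  ultimately show "x - y \<in> regular_radical"
    unfolding regular_radical_mem_iff using ideal_set_plus[OF I(1) J(1)] by blast
next
  fix a x assume "a \<in> S" "x \<in> regular_radical"
  then show "mul a x \<in> regular_radical" "mul x a \<in> regular_radical"
    unfolding regular_radical_mem_iff ideal_def by blast+
qed

end

definition matrix_supp :: "('i \<Rightarrow> 'i \<Rightarrow> 'a::zero) \<Rightarrow> ('i \<times> 'i) set" where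
  "matrix_supp x = {(i, j). x i j \<noteq> 0}"

definition matrix_rows :: "('i \<Rightarrow> 'i \<Rightarrow> 'a::zero) \<Rightarrow> 'i set" where
  "matrix_rows x = fst ` matrix_supp x"

definition matrix_cols :: "('i \<Rightarrow> 'i \<Rightarrow> 'a::zero) \<Rightarrow> 'i set" where
  "matrix_cols x = snd ` matrix_supp x"

lemma nonzero_entry_in_rows_cols:
  assumes "x i j \<noteq> 0"
  shows "i \<in> matrix_rows x" and "j \<in> matrix_cols x"
  using assms unfolding matrix_rows_def matrix_cols_def matrix_supp_def by force+

lemma finite_rows_cols:
  assumes "finite (matrix_supp x)"
  shows "finite (matrix_rows x)" and "finite (matrix_cols x)"
  using assms unfolding matrix_rows_def matrix_cols_def by simp_all

lemma matrix_supp_empty_iff: "matrix_supp x = {} \<longleftrightarrow> x = 0"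
  unfolding matrix_supp_def by (auto simp: fun_eq_iff)

lemma gm_carrier_iff: "x \<in> gm_carrier C \<longleftrightarrow> finite (matrix_supp x) \<and> (\<forall>i j. x i j \<in> C i j)"
  unfolding gm_carrier_def matrix_supp_def by simp

lemma gm_sum_iff: "x \<in> gm_sum Q \<longleftrightarrow> finite (matrix_supp x) \<and> (\<forall>i j. x i j \<in> Q i j)"
  unfolding gm_sum_def matrix_supp_def by simp

lemma gm_carrier_eq_gm_sum: "gm_carrier C = gm_sum C"
  unfolding gm_carrier_def gm_sum_def ..

lemma gm_sum_restrict:
  assumes "\<And>i j. 0 \<in> Q i j" "x \<in> gm_sum Q" "\<And>i j. y i j = x i j \<or> y i j = 0"
  shows "y \<in> gm_sum Q"
proof -
  have "matrix_supp y \<subseteq> matrix_supp x" using assms(3) unfolding matrix_supp_def by force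
  then have "finite (matrix_supp y)" using assms(2) unfolding gm_sum_iff by (blast intro: finite_subset)
  moreover have "y i j \<in> Q i j" for i j using assms(1)[of i j] assms(3)[of i j] assms(2) unfolding gm_sum_iff by auto
  ultimately show ?thesis unfolding gm_sum_iff by blast
qed

lemma matrix_rows_diff_subset:
  fixes x y :: "'i \<Rightarrow> 'i \<Rightarrow> 'a::ab_group_add"
  shows "matrix_rows (x - y) \<subseteq> matrix_rows x \<union> matrix_rows y"
proof
  fix i assume "i \<in> matrix_rows (x - y)"
  then obtain j where "x i j - y i j \<noteq> 0" unfolding matrix_rows_def matrix_supp_def by auto
  then have "x i j \<noteq> 0 \<or> y i j \<noteq> 0" by auto
  then show "i \<in> matrix_rows x \<union> matrix_rows y"
    using nonzero_entry_in_rows_cols(1)[of x i j] nonzero_entry_in_rows_cols(1)[of y i j] by blast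
qed

lemma rn_gamma_subset: "rn_gamma C m i j \<subseteq> C i j"
  unfolding rn_gamma_def gamma_ideal_def by blast

locale gen_matrix_ring =
  fixes C :: "'i \<Rightarrow> 'i \<Rightarrow> 'a::ab_group_add set" and m :: "'i \<Rightarrow> 'i \<Rightarrow> 'i \<Rightarrow> 'a \<Rightarrow> 'a \<Rightarrow> 'a"
  assumes gm_ring: "gm_ring C m"
begin

lemma zero_mem [simp]: "0 \<in> C i j"
  and diff_mem [simp]: "x \<in> C i j \<Longrightarrow> y \<in> C i j \<Longrightarrow> x - y \<in> C i j"
  and mult_mem [simp]: "x \<in> C i j \<Longrightarrow> y \<in> C j l \<Longrightarrow> m i j l x y \<in> C i l"
  and mult_add_left: "x \<in> C i j \<Longrightarrow> x' \<in> C i j \<Longrightarrow> y \<in> C j l \<Longrightarrow>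
    m i j l (x + x') y = m i j l x y + m i j l x' y"
  and mult_add_right: "x \<in> C i j \<Longrightarrow> y \<in> C j l \<Longrightarrow> y' \<in> C j l \<Longrightarrow>
    m i j l x (y + y') = m i j l x y + m i j l x y'"
  and mult_assoc: "x \<in> C i j \<Longrightarrow> y \<in> C j k \<Longrightarrow> z \<in> C k l \<Longrightarrow>
    m i k l (m i j k x y) z = m i j l x (m j k l y z)"
  using gm_ring unfolding gm_ring_def by simp_all

lemma uminus_mem [simp]: "x \<in> C i j \<Longrightarrow> - x \<in> C i j"
  using diff_mem[of 0 i j x] by simp

lemma add_mem [simp]: "x \<in> C i j \<Longrightarrow> y \<in> C i j \<Longrightarrow> x + y \<in> C i j"
  using diff_mem[of x i j "- y"] by simp

lemma sum_mem: "(\<And>k. k \<in> K \<Longrightarrow> f k \<in> C i j) \<Longrightarrow> sum f K \<in> C i j"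
  by (induction K rule: infinite_finite_induct) auto

lemma mult_zero_left [simp]: "y \<in> C j l \<Longrightarrow> m i j l 0 y = 0"
  using mult_add_left[of 0 i j 0 y l] by simp

lemma mult_zero_right [simp]: "x \<in> C i j \<Longrightarrow> m i j l x 0 = 0"
  using mult_add_right[of x i j 0 l 0] by simp

lemma mult_diff_left: "x \<in> C i j \<Longrightarrow> x' \<in> C i j \<Longrightarrow> y \<in> C j l \<Longrightarrow>
    m i j l (x - x') y = m i j l x y - m i j l x' y"
  using mult_add_left[of "x - x'" i j x' y l] by (simp add: eq_diff_eq)

lemma mult_diff_right: "x \<in> C i j \<Longrightarrow> y \<in> C j l \<Longrightarrow> y' \<in> C j l \<Longrightarrow>
    m i j l x (y - y') = m i j l x y - m i j l x y'"
  using mult_add_right[of x i j "y - y'" l y'] by (simp add: eq_diff_eq)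

lemma mult_sum_left: "(\<And>k. k \<in> K \<Longrightarrow> f k \<in> C i j) \<Longrightarrow> y \<in> C j l \<Longrightarrow>
    m i j l (sum f K) y = (\<Sum>k\<in>K. m i j l (f k) y)"
  by (induction K rule: infinite_finite_induct) (auto simp: mult_add_left sum_mem)

lemma mult_sum_right: "(\<And>k. k \<in> K \<Longrightarrow> f k \<in> C j l) \<Longrightarrow> x \<in> C i j \<Longrightarrow>
    m i j l x (sum f K) = (\<Sum>k\<in>K. m i j l x (f k))"
  by (induction K rule: infinite_finite_induct) (auto simp: mult_add_right sum_mem)

lemma carrier_entry [simp]: "x \<in> gm_carrier C \<Longrightarrow> x i j \<in> C i j"
  unfolding gm_carrier_iff by blast

lemma finite_supp_carrier: "x \<in> gm_carrier C \<Longrightarrow> finite (matrix_supp x)"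
  unfolding gm_carrier_iff by blast

lemma gm_mult_eq_sum:
  assumes "finite K" "\<And>k. x i k \<noteq> 0 \<Longrightarrow> k \<in> K" "\<And>k. k \<in> K \<Longrightarrow> y k j \<in> C k j"
  shows "gm_mult m x y i j = (\<Sum>k\<in>K. m i k j (x i k) (y k j))"
  unfolding gm_mult_def
proof (rule sum.mono_neutral_left)
  show "\<forall>k\<in>K - {k. x i k \<noteq> 0}. m i k j (x i k) (y k j) = 0" using assms(3) by simp
qed (use assms(1,2) in auto)

lemma gm_mult_carrier_eq_sum:
  assumes "x \<in> gm_carrier C" "y \<in> gm_carrier C"
  shows "gm_mult m x y i j = (\<Sum>k\<in>matrix_cols x. m i k j (x i k) (y k j))"
  using assms by (intro gm_mult_eq_sum)
    (simp_all add: finite_rows_cols finite_supp_carrier nonzero_entry_in_rows_cols)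

lemma gm_mult_nonzero_entry:
  assumes "gm_mult m x y i j \<noteq> 0" "\<And>k. x i k \<in> C i k"
  obtains k where "x i k \<noteq> 0" "y k j \<noteq> 0"
proof -
  have "\<exists>k\<in>{k. x i k \<noteq> 0}. m i k j (x i k) (y k j) \<noteq> 0"
  proof (rule ccontr)
    assume "\<not> ?thesis"
    then have "gm_mult m x y i j = 0" unfolding gm_mult_def by (intro sum.neutral) blast
    with assms(1) show False by contradiction
  qed
  then obtain k where "x i k \<noteq> 0" "m i k j (x i k) (y k j) \<noteq> 0" by blast
  moreover have "y k j \<noteq> 0" using calculation(2) assms(2)[of k] by auto
  ultimately show ?thesis using that by blast
qed

lemma matrix_rows_gm_mult_subset:
  assumes "x \<in> gm_carrier C"
  shows "matrix_rows (gm_mult m x y) \<subseteq> matrix_rows x"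
proof
  fix i assume "i \<in> matrix_rows (gm_mult m x y)"
  then obtain j where "gm_mult m x y i j \<noteq> 0" unfolding matrix_rows_def matrix_supp_def by auto
  then obtain k where "x i k \<noteq> 0" by (rule gm_mult_nonzero_entry) (simp add: assms)
  then show "i \<in> matrix_rows x" by (rule nonzero_entry_in_rows_cols)
qed

lemma gm_carrier_diff: "x \<in> gm_carrier C \<Longrightarrow> y \<in> gm_carrier C \<Longrightarrow> x - y \<in> gm_carrier C"
proof -
  assume "x \<in> gm_carrier C" "y \<in> gm_carrier C"
  moreover have "matrix_supp (x - y) \<subseteq> matrix_supp x \<union> matrix_supp y"
    unfolding matrix_supp_def by auto
  ultimately show ?thesis unfolding gm_carrier_iff by (auto intro: finite_subset)
qed

lemma gm_mult_carrier:
  assumes x: "x \<in> gm_carrier C" and y: "y \<in> gm_carrier C"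
  shows "gm_mult m x y \<in> gm_carrier C"
  unfolding gm_carrier_iff
proof (intro conjI allI)
  have "matrix_supp (gm_mult m x y) \<subseteq> matrix_rows x \<times> matrix_cols y"
  proof
    fix p assume "p \<in> matrix_supp (gm_mult m x y)"
    then obtain i j where p: "p = (i, j)" "gm_mult m x y i j \<noteq> 0" unfolding matrix_supp_def by auto
    from p(2) obtain k where "x i k \<noteq> 0" "y k j \<noteq> 0" by (rule gm_mult_nonzero_entry) (simp add: x)
    then show "p \<in> matrix_rows x \<times> matrix_cols y" by (simp add: p nonzero_entry_in_rows_cols)
  qed
  moreover have "finite (matrix_rows x \<times> matrix_cols y)"
    using x y by (simp add: finite_rows_cols finite_supp_carrier)
  ultimately show "finite (matrix_supp (gm_mult m x y))" by (rule finite_subset)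
  show "gm_mult m x y i j \<in> C i j" for i j
    unfolding gm_mult_def using x y by (intro sum_mem) simp
qed

lemma gm_mult_assoc:
  assumes x: "x \<in> gm_carrier C" and y: "y \<in> gm_carrier C" and z: "z \<in> gm_carrier C"
  shows "gm_mult m (gm_mult m x y) z = gm_mult m x (gm_mult m y z)"
proof (intro ext)
  fix i j
  let ?K = "matrix_cols x" and ?L = "matrix_cols y"
  have "gm_mult m (gm_mult m x y) z i j = (\<Sum>l\<in>?L. m i l j (gm_mult m x y i l) (z l j))"
  proof (rule gm_mult_eq_sum)
    fix l assume "gm_mult m x y i l \<noteq> 0"
    then obtain k where "y k l \<noteq> 0" by (rule gm_mult_nonzero_entry) (simp add: x)
    then show "l \<in> ?L" by (rule nonzero_entry_in_rows_cols)
  qed (simp_all add: y z finite_rows_cols finite_supp_carrier)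
  also have "\<dots> = (\<Sum>l\<in>?L. \<Sum>k\<in>?K. m i l j (m i k l (x i k) (y k l)) (z l j))"
    using x y z by (intro sum.cong refl) (simp add: gm_mult_carrier_eq_sum mult_sum_left)
  also have "\<dots> = (\<Sum>k\<in>?K. \<Sum>l\<in>?L. m i k j (x i k) (m k l j (y k l) (z l j)))"
    using x y z by (subst sum.swap) (intro sum.cong refl; simp add: mult_assoc)
  also have "\<dots> = (\<Sum>k\<in>?K. m i k j (x i k) (gm_mult m y z k j))"
    using x y z by (intro sum.cong refl) (simp add: gm_mult_carrier_eq_sum mult_sum_right)
  also have "\<dots> = gm_mult m x (gm_mult m y z) i j"
    using x gm_mult_carrier[OF y z] by (simp add: gm_mult_carrier_eq_sum)
  finally show "gm_mult m (gm_mult m x y) z i j = gm_mult m x (gm_mult m y z) i j" .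
qed

lemma gm_mult_add_right:
  assumes x: "x \<in> gm_carrier C" and y: "y \<in> gm_carrier C" and z: "z \<in> gm_carrier C"
  shows "gm_mult m x (y + z) = gm_mult m x y + gm_mult m x z"
proof (intro ext)
  fix i j
  show "gm_mult m x (y + z) i j = (gm_mult m x y + gm_mult m x z) i j"
    unfolding gm_mult_def plus_fun_apply sum.distrib[symmetric]
    using x y z by (intro sum.cong refl) (simp add: mult_add_right)
qed

lemma gm_mult_add_left:
  assumes x: "x \<in> gm_carrier C" and y: "y \<in> gm_carrier C" and z: "z \<in> gm_carrier C"
  shows "gm_mult m (x + y) z = gm_mult m x z + gm_mult m y z"
proof (intro ext)
  fix i j
  let ?K = "matrix_cols x \<union> matrix_cols y"
  have K: "finite ?K" using x y by (simp add: finite_rows_cols finite_supp_carrier)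
  have "gm_mult m (x + y) z i j = (\<Sum>k\<in>?K. m i k j ((x + y) i k) (z k j))"
  proof (rule gm_mult_eq_sum)
    fix k assume "(x + y) i k \<noteq> 0"
    then show "k \<in> ?K" using nonzero_entry_in_rows_cols(2)[of x i k] nonzero_entry_in_rows_cols(2)[of y i k]
      by (cases "x i k = 0") auto
  qed (use K z in simp_all)
  also have "\<dots> = (\<Sum>k\<in>?K. m i k j (x i k) (z k j)) + (\<Sum>k\<in>?K. m i k j (y i k) (z k j))"
    using x y z by (simp add: mult_add_left sum.distrib)
  also have "\<dots> = (gm_mult m x z + gm_mult m y z) i j"
    using K z gm_mult_eq_sum[of ?K x i z j] gm_mult_eq_sum[of ?K y i z j]
    by (simp add: nonzero_entry_in_rows_cols)
  finally show "gm_mult m (x + y) z i j = (gm_mult m x z + gm_mult m y z) i j" .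
qed

sublocale A: nonunital_ring "gm_carrier C" "gm_mult m"
proof
  show "0 \<in> gm_carrier C" by (simp add: gm_carrier_iff matrix_supp_empty_iff[THEN iffD2])
qed (simp_all add: gm_carrier_diff gm_mult_carrier gm_mult_assoc gm_mult_add_left gm_mult_add_right)


lemma gm_ideal_of_eq_ideal: "gm_ideal_of C m = A.ideal"
proof -
  have diff_eq: "(\<lambda>i j. x i j - y i j) = x - y" for x y :: "'i \<Rightarrow> 'i \<Rightarrow> 'a"
    by (simp add: fun_eq_iff)
  have zero_eq: "(\<lambda>i j. 0) = (0 :: 'i \<Rightarrow> 'i \<Rightarrow> 'a)" by (simp add: fun_eq_iff)
  show ?thesis unfolding gm_ideal_of_def A.ideal_def diff_eq zero_eq ..
qed

lemma rn_ring_eq_regular_radical: "rn_ring C m = A.regular_radical"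
  unfolding rn_ring_def A.regular_radical_def gm_ideal_of_eq_ideal gm_regular_def A.regular_def ..
end

definition single_entry :: "'i \<Rightarrow> 'i \<Rightarrow> 'a \<Rightarrow> ('i \<Rightarrow> 'i \<Rightarrow> 'a::zero)" where
  "single_entry s t a = (\<lambda>i j. if i = s \<and> j = t then a else 0)"

lemma single_entry_apply: "single_entry s t a i j = (if i = s \<and> j = t then a else 0)"
  unfolding single_entry_def by simp

lemma matrix_supp_single_entry: "matrix_supp (single_entry s t a) \<subseteq> {(s, t)}"
  unfolding matrix_supp_def single_entry_def by auto

context gen_matrix_ring
begin

lemma single_entry_carrier [simp]: "a \<in> C s t \<Longrightarrow> single_entry s t a \<in> gm_carrier C"
  unfolding gm_carrier_iff
  by (simp add: single_entry_apply finite_subset[OF matrix_supp_single_entry])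

lemma gm_mult_if_row_supported:
  assumes "x \<in> gm_carrier C" "r \<in> gm_carrier C" "\<And>k j. k \<noteq> s \<Longrightarrow> r k j = 0"
  shows "gm_mult m x r i j = m i s j (x i s) (r s j)"
proof -
  have "gm_mult m x r i j = (\<Sum>k\<in>insert s (matrix_cols x). m i k j (x i k) (r k j))"
    using assms(1,2) by (intro gm_mult_eq_sum)
      (simp_all add: finite_rows_cols finite_supp_carrier nonzero_entry_in_rows_cols)
  also have "\<dots> = m i s j (x i s) (r s j)"
    using assms by (simp add: sum.insert_remove finite_rows_cols finite_supp_carrier)
  finally show ?thesis .
qed

lemma gm_mult_if_col_supported:
  assumes "r \<in> gm_carrier C" "\<And>k. k \<noteq> s \<Longrightarrow> x i k = 0"
  shows "gm_mult m x r i j = m i s j (x i s) (r s j)"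
proof -
  have "gm_mult m x r i j = (\<Sum>k\<in>{s}. m i k j (x i k) (r k j))"
    using assms by (intro gm_mult_eq_sum) auto
  then show ?thesis by simp
qed

lemma single_entry_mult:
  assumes "a \<in> C s t" "x \<in> gm_carrier C"
  shows "gm_mult m (single_entry s t a) x = (\<lambda>i j. if i = s then m s t j a (x t j) else 0)"
proof (intro ext)
  fix i j
  have "gm_mult m (single_entry s t a) x i j = m i t j (single_entry s t a i t) (x t j)"
    using assms by (intro gm_mult_if_col_supported) (simp_all add: single_entry_apply)
  then show "gm_mult m (single_entry s t a) x i j = (if i = s then m s t j a (x t j) else 0)"
    using assms by (simp add: single_entry_apply)
qed

lemma mult_single_entry:
  assumes "a \<in> C s t" "x \<in> gm_carrier C"
  shows "gm_mult m x (single_entry s t a) = (\<lambda>i j. if j = t then m i s t (x i s) a else 0)"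
proof (intro ext)
  fix i j
  have "gm_mult m x (single_entry s t a) i j = m i s j (x i s) (single_entry s t a s j)"
    using assms by (intro gm_mult_if_row_supported) (simp_all add: single_entry_apply)
  then show "gm_mult m x (single_entry s t a) i j = (if j = t then m i s t (x i s) a else 0)"
    using assms by (simp add: single_entry_apply)
qed

lemma single_entry_mult_single_entry:
  assumes "a \<in> C s t" "b \<in> C t u"
  shows "gm_mult m (single_entry s t a) (single_entry t u b) = single_entry s u (m s t u a b)"
  using assms by (simp add: single_entry_mult fun_eq_iff single_entry_apply)

lemma single_entry_sandwich:
  assumes "u \<in> C k s" "x \<in> gm_carrier C" "v \<in> C t j"
  shows "gm_mult m (gm_mult m (single_entry k s u) x) (single_entry t j v)
    = single_entry k j (m k t j (m k s t u (x s t)) v)"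
proof -
  have "gm_mult m (single_entry k s u) x \<in> gm_carrier C" using assms by (simp add: A.mul_mem)
  then show ?thesis
    using assms by (simp add: mult_single_entry single_entry_mult fun_eq_iff single_entry_apply)
qed

lemma gamma_regular_if_single_entry_regular:
  assumes a: "a \<in> C s t" and reg: "A.regular (single_entry s t a)"
  shows "gamma_regular C m s t a"
proof -
  obtain z where z: "z \<in> gm_carrier C"
    and z_inverse: "single_entry s t a = gm_mult m (gm_mult m (single_entry s t a) z) (single_entry s t a)"
    using reg unfolding A.regular_def by blast
  note z_inverse
  also have "\<dots> = single_entry s t (m s s t (m s t s a (z t s)) a)"
    by (rule single_entry_sandwich[OF a z a])
  finally have "a = m s s t (m s t s a (z t s)) a" by (metis single_entry_apply)
  then show ?thesis unfolding gamma_regular_def using z by auto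
qed

lemma gamma_ideal_entries_of_ideal:
  assumes B: "A.ideal B"
  shows "gamma_ideal C m i j ((\<lambda>x. x i j) ` B)"
  unfolding gamma_ideal_def
proof (intro conjI ballI)
  have B_carrier: "B \<subseteq> gm_carrier C" and B_zero: "0 \<in> B"
    and B_diff: "\<And>x y. x \<in> B \<Longrightarrow> y \<in> B \<Longrightarrow> x - y \<in> B"
    and B_mult: "\<And>a x. a \<in> gm_carrier C \<Longrightarrow> x \<in> B \<Longrightarrow> gm_mult m a x \<in> B \<and> gm_mult m x a \<in> B"
    using B unfolding A.ideal_def by auto
  show "(\<lambda>x. x i j) ` B \<subseteq> C i j" using B_carrier by auto
  show "0 \<in> (\<lambda>x. x i j) ` B" using image_eqI[of 0 "\<lambda>x. x i j", OF _ B_zero] by simp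
  show "u - v \<in> (\<lambda>x. x i j) ` B" if "u \<in> (\<lambda>x. x i j) ` B" "v \<in> (\<lambda>x. x i j) ` B" for u v
  proof -
    from that obtain x y where "x \<in> B" "y \<in> B" "u = x i j" "v = y i j" by blast
    then show ?thesis using image_eqI[of "u - v" "\<lambda>x. x i j", OF _ B_diff] by simp
  qed
  fix a g b assume a: "a \<in> C i j" and g: "g \<in> C j i" and "b \<in> (\<lambda>x. x i j) ` B"
  then obtain x where x: "x \<in> B" "b = x i j" by blast
  then have xC: "x \<in> gm_carrier C" using B_carrier by blast
  have "m i i j (m i j i a g) b = gm_mult m (single_entry i i (m i j i a g)) x i j"
    using a g x xC by (simp add: single_entry_mult)
  moreover have "gm_mult m (single_entry i i (m i j i a g)) x \<in> B"
    using B_mult x a g by simp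
  ultimately show "m i i j (m i j i a g) b \<in> (\<lambda>x. x i j) ` B" by (rule image_eqI)
  have "m i i j (m i j i b g) a = gm_mult m x (single_entry j j (m j i j g a)) i j"
    using a g x xC by (simp add: mult_single_entry mult_assoc)
  moreover have "gm_mult m x (single_entry j j (m j i j g a)) \<in> B"
    using B_mult x a g by simp
  ultimately show "m i i j (m i j i b g) a \<in> (\<lambda>x. x i j) ` B" by (rule image_eqI)
qed

lemma cancel_left:
  assumes "d \<in> C k s" "\<forall>j. \<forall>y\<in>C s j. y \<noteq> 0 \<longrightarrow> m k s j d y \<noteq> 0"
    and "m k s j d a = m k s j d b" "a \<in> C s j" "b \<in> C s j"
  shows "a = b"
  using assms mult_diff_right[of d k s a j b] by (metis diff_mem eq_iff_diff_eq_0)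

lemma cancel_right:
  assumes "d \<in> C t j" "\<forall>i. \<forall>x\<in>C i t. x \<noteq> 0 \<longrightarrow> m i t j x d \<noteq> 0"
    and "m i t j a d = m i t j b d" "a \<in> C i t" "b \<in> C i t"
  shows "a = b"
  using assms mult_diff_left[of a i t b d j] by (metis diff_mem eq_iff_diff_eq_0)

lemma ideal_mem_if_single_entries_mem:
  assumes I: "A.ideal I" and x: "x \<in> gm_carrier C"
    and entries: "\<And>i j. single_entry i j (x i j) \<in> I"
  shows "x \<in> I"
proof -
  have restriction_mem: "(\<lambda>i j. if (i, j) \<in> P then x i j else 0) \<in> I" if "finite P" for P
    using that
  proof (induction P rule: finite_induct)
    case empty
    then show ?case using I unfolding A.ideal_def by (simp add: zero_fun_def)
  next
    case (insert p P)
    obtain i j where p: "p = (i, j)" by (cases p)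
    have "(\<lambda>k l. if (k, l) \<in> insert p P then x k l else 0)
        = (\<lambda>k l. if (k, l) \<in> P then x k l else 0) + single_entry i j (x i j)"
      using insert.hyps(2) unfolding p by (auto simp: fun_eq_iff single_entry_apply)
    then show ?case using A.ideal_add[OF I insert.IH entries] by simp
  qed
  have "x = (\<lambda>i j. if (i, j) \<in> matrix_supp x then x i j else 0)"
    by (auto simp: fun_eq_iff matrix_supp_def)
  also have "\<dots> \<in> I" by (rule restriction_mem[OF finite_supp_carrier[OF x]])
  finally show ?thesis .
qed

definition sandwich_family :: "'i \<Rightarrow> 'i \<Rightarrow> 'a set \<Rightarrow> 'i \<Rightarrow> 'i \<Rightarrow> 'a set" where
  "sandwich_family k j B s t = {y \<in> C s t. \<forall>u\<in>C k s. \<forall>v\<in>C t j. m k t j (m k s t u y) v \<in> B}"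

lemma mem_sandwich_family_self:
  assumes B: "gamma_ideal C m k j B" "\<forall>b\<in>B. gamma_regular C m k j b" and b: "b \<in> B"
  shows "b \<in> sandwich_family k j B k j"
  unfolding sandwich_family_def
proof (intro CollectI conjI ballI)
  have B_C: "B \<subseteq> C k j"
    and B_left: "\<And>a g x. a \<in> C k j \<Longrightarrow> g \<in> C j k \<Longrightarrow> x \<in> B \<Longrightarrow> m k k j (m k j k a g) x \<in> B"
    and B_right: "\<And>a g x. a \<in> C k j \<Longrightarrow> g \<in> C j k \<Longrightarrow> x \<in> B \<Longrightarrow> m k k j (m k j k x g) a \<in> B"
    using B(1) unfolding gamma_ideal_def by blast+
  have reg: "\<exists>g\<in>C j k. x = m k k j (m k j k x g) x" if "x \<in> B" for x
    using B(2) that unfolding gamma_regular_def by blast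
  show bC: "b \<in> C k j" using b B_C by blast
  fix u v assume u: "u \<in> C k k" and v: "v \<in> C j j"
  obtain g where g: "g \<in> C j k" "b = m k k j (m k j k b g) b" using reg[OF b] by blast
  define x where "x = m k k j u b"
  have xC: "x \<in> C k j" unfolding x_def using u bC by simp
  have "x = m k k j u (m k k j (m k j k b g) b)" unfolding x_def using g(2) by simp
  also have "\<dots> = m k k j (m k j k x g) b" unfolding x_def using u bC g by (simp add: mult_assoc)
  finally have xB: "x \<in> B" using B_left[of x g b] xC g b by simp
  obtain g' where g': "g' \<in> C j k" "x = m k k j (m k j k x g') x" using reg[OF xB] by blast
  have "m k j j x v = m k j j (m k k j (m k j k x g') x) v" using g'(2) by (rule arg_cong)
  also have "\<dots> = m k k j (m k j k x g') (m k j j x v)" using xC v g'(1) by (simp add: mult_assoc)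
  finally show "m k j j (m k k j u b) v \<in> B"
    unfolding x_def[symmetric] using B_right[of "m k j j x v" g' x] xC v g' xB by simp
qed

end

locale gen_matrix_ring_nzd = gen_matrix_ring +
  assumes nonzero_divisors: "has_gm_nonzero_divisors C m"
begin

text \<open>With non-zero divisors \<open>d \<in> A\<^sub>k\<^sub>s\<close> and \<open>d' \<in> A\<^sub>t\<^sub>j\<close>, an inner inverse \<open>g\<close> of
  \<open>d y d'\<close> yields the inner inverse \<open>d' g d\<close> of \<open>y\<close>, after cancelling \<open>d\<close> and \<open>d'\<close>.\<close>
lemma gamma_regular_if_sandwiches_regular:
  assumes y: "y \<in> C s t"
    and sandwiches: "\<forall>u\<in>C k s. \<forall>v\<in>C t j. gamma_regular C m k j (m k t j (m k s t u y) v)"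
  shows "gamma_regular C m s t y"
proof -
  obtain d where d: "d \<in> C k s" "\<forall>j. \<forall>y\<in>C s j. y \<noteq> 0 \<longrightarrow> m k s j d y \<noteq> 0"
    using nonzero_divisors[unfolded has_gm_nonzero_divisors_def, rule_format, of k s] by blast
  obtain d' where d': "d' \<in> C t j" "\<forall>i. \<forall>x\<in>C i t. x \<noteq> 0 \<longrightarrow> m i t j x d' \<noteq> 0"
    using nonzero_divisors[unfolded has_gm_nonzero_divisors_def, rule_format, of t j] by blast
  obtain g where g: "g \<in> C j k"
    and "m k t j (m k s t d y) d' = m k k j (m k j k (m k t j (m k s t d y) d') g) (m k t j (m k s t d y) d')"
    using sandwiches d(1) d'(1) unfolding gamma_regular_def by blast
  then have "m k s j d (m s t j y d') = m k s j d (m s t j (m s s t (m s t s y (m t j s d' (m j k s g d))) y) d')"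
    using y d(1) d'(1) by (simp add: mult_assoc)
  with d have "m s t j y d' = m s t j (m s s t (m s t s y (m t j s d' (m j k s g d))) y) d'"
    by (rule cancel_left) (use y d d' g in simp_all)
  with d' have "y = m s s t (m s t s y (m t j s d' (m j k s g d))) y"
    by (rule cancel_right) (use y d d' g in simp_all)
  moreover have "m t j s d' (m j k s g d) \<in> C t s" using d d' g by simp
  ultimately show ?thesis unfolding gamma_regular_def by blast
qed

lemma gamma_regular_entry_of_regular_ideal:
  assumes B: "A.ideal B" "\<forall>x\<in>B. A.regular x" and x: "x \<in> B"
  shows "gamma_regular C m s t (x s t)"
proof -
  have xC: "x \<in> gm_carrier C" using B x unfolding A.ideal_def by blast
  have "gamma_regular C m s t (m s t t (m s s t u (x s t)) v)" if "u \<in> C s s" "v \<in> C t t" for u v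
  proof (rule gamma_regular_if_single_entry_regular)
    have "gm_mult m (gm_mult m (single_entry s s u) x) (single_entry t t v) \<in> B"
      using B x that unfolding A.ideal_def by simp
    then show "A.regular (single_entry s t (m s t t (m s s t u (x s t)) v))"
      using B that xC by (simp add: single_entry_sandwich)
  qed (use that xC in simp)
  then show ?thesis using xC by (intro gamma_regular_if_sandwiches_regular) auto
qed

lemma regular_radical_entry_mem: "x \<in> A.regular_radical \<Longrightarrow> x i j \<in> rn_gamma C m i j"
  unfolding rn_gamma_def
  using gamma_ideal_entries_of_ideal[OF A.ideal_regular_radical]
    gamma_regular_entry_of_regular_ideal[OF A.ideal_regular_radical] A.regular_if_in_regular_radical
  by blast

end

locale gm_ideal_family = gen_matrix_ring C m
  for C :: "'i \<Rightarrow> 'i \<Rightarrow> 'a::ab_group_add set" and m +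
  fixes Q :: "'i \<Rightarrow> 'i \<Rightarrow> 'a set"
  assumes family_subset: "Q s t \<subseteq> C s t"
    and family_zero: "0 \<in> Q s t"
    and family_diff: "x \<in> Q s t \<Longrightarrow> y \<in> Q s t \<Longrightarrow> x - y \<in> Q s t"
    and family_mult_left: "a \<in> C r s \<Longrightarrow> y \<in> Q s t \<Longrightarrow> m r s t a y \<in> Q r t"
    and family_mult_right: "y \<in> Q r s \<Longrightarrow> a \<in> C s t \<Longrightarrow> m r s t y a \<in> Q r t"
begin

lemma family_add: "x \<in> Q s t \<Longrightarrow> y \<in> Q s t \<Longrightarrow> x + y \<in> Q s t"
  using family_diff[of x s t "- y"] family_diff[OF family_zero, of y] by simp

lemma family_sum: "(\<And>k. k \<in> K \<Longrightarrow> f k \<in> Q s t) \<Longrightarrow> sum f K \<in> Q s t"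
  by (induction K rule: infinite_finite_induct) (auto simp: family_zero family_add)

lemma gm_sum_subset_carrier: "gm_sum Q \<subseteq> gm_carrier C"
proof
  fix x assume "x \<in> gm_sum Q"
  then show "x \<in> gm_carrier C" using family_subset unfolding gm_sum_iff gm_carrier_iff by blast
qed

lemma gm_sum_restrict_family: "x \<in> gm_sum Q \<Longrightarrow> (\<And>i j. y i j = x i j \<or> y i j = 0) \<Longrightarrow> y \<in> gm_sum Q"
  by (rule gm_sum_restrict[OF family_zero])

lemma gm_sum_entry: "x \<in> gm_sum Q \<Longrightarrow> x i j \<in> Q i j"
  unfolding gm_sum_iff by blast

lemma single_entry_gm_sum: "a \<in> Q s t \<Longrightarrow> single_entry s t a \<in> gm_sum Q"
  unfolding gm_sum_iff using family_zero
  by (simp add: single_entry_apply finite_subset[OF matrix_supp_single_entry])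

lemma ideal_gm_sum: "A.ideal (gm_sum Q)"
  unfolding A.ideal_def
proof (intro conjI ballI)
  show "gm_sum Q \<subseteq> gm_carrier C" by (rule gm_sum_subset_carrier)
  show "0 \<in> gm_sum Q" using family_zero unfolding gm_sum_iff matrix_supp_def by simp
next
  fix x y assume "x \<in> gm_sum Q" "y \<in> gm_sum Q"
  moreover have "x - y \<in> gm_carrier C" using calculation gm_sum_subset_carrier gm_carrier_diff by blast
  ultimately show "x - y \<in> gm_sum Q"
    unfolding gm_sum_iff using finite_supp_carrier family_diff by auto
next
  fix a x assume a: "a \<in> gm_carrier C" and x: "x \<in> gm_sum Q"
  then have xC: "x \<in> gm_carrier C" using gm_sum_subset_carrier by blast
  show "gm_mult m a x \<in> gm_sum Q"
    unfolding gm_sum_iff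
  proof (intro conjI allI)
    show "finite (matrix_supp (gm_mult m a x))" using a xC by (simp add: finite_supp_carrier gm_mult_carrier)
    show "gm_mult m a x i j \<in> Q i j" for i j
      unfolding gm_mult_def using a x by (intro family_sum family_mult_left) (simp_all add: gm_sum_entry)
  qed
  show "gm_mult m x a \<in> gm_sum Q"
    unfolding gm_sum_iff
  proof (intro conjI allI)
    show "finite (matrix_supp (gm_mult m x a))" using a xC by (simp add: finite_supp_carrier gm_mult_carrier)
    show "gm_mult m x a i j \<in> Q i j" for i j
      unfolding gm_mult_def using a x by (intro family_sum family_mult_right) (simp_all add: gm_sum_entry)
  qed
qed

end

locale regular_gm_ideal_family = gm_ideal_family +
  assumes family_gamma_regular: "y \<in> Q s t \<Longrightarrow> gamma_regular C m s t y"
begin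

lemma gm_sum_diff: "x \<in> gm_sum Q \<Longrightarrow> y \<in> gm_sum Q \<Longrightarrow> x - y \<in> gm_sum Q"
  using ideal_gm_sum unfolding A.ideal_def by blast

lemma gm_sum_mult_left: "a \<in> gm_carrier C \<Longrightarrow> x \<in> gm_sum Q \<Longrightarrow> gm_mult m a x \<in> gm_sum Q"
  using ideal_gm_sum unfolding A.ideal_def by blast

lemma gm_sum_mult_right: "x \<in> gm_sum Q \<Longrightarrow> a \<in> gm_carrier C \<Longrightarrow> gm_mult m x a \<in> gm_sum Q"
  using ideal_gm_sum unfolding A.ideal_def by blast

text \<open>Split off one entry \<open>y = x\<^sub>s\<^sub>t\<close> with inner inverse \<open>w\<close>; then \<open>z = w e\<^sub>t\<^sub>s\<close> kills
  the rest of the row from the right, and the remainder has strictly smaller support.\<close>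
lemma regular_if_in_gm_sum_row:
  assumes "x \<in> gm_sum Q" "matrix_rows x \<subseteq> {s}"
  shows "A.regular x"
  using assms
proof (induction "card (matrix_supp x)" arbitrary: x rule: less_induct)
  case less
  show ?case
  proof (cases "x = 0")
    case True
    then show ?thesis using A.regular_zero by simp
  next
    case False
    then have "matrix_supp x \<noteq> {}" by (simp add: matrix_supp_empty_iff)
    then obtain i t where "x i t \<noteq> 0" unfolding matrix_supp_def by auto
    moreover have "i = s" using less.prems(2) nonzero_entry_in_rows_cols(1)[of x i t] calculation by blast
    ultimately have xst: "x s t \<noteq> 0" by simp
    define y where "y = x s t"
    have yQ: "y \<in> Q s t" unfolding y_def using less.prems(1) by (rule gm_sum_entry)
    then have yC: "y \<in> C s t" using family_subset by blast
    obtain w where wC: "w \<in> C t s" and yw: "y = m s s t (m s t s y w) y"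
      using family_gamma_regular[OF yQ] unfolding gamma_regular_def by blast
    define p where "p = single_entry s t y"
    define q where "q = x - p"
    define z where "z = single_entry t s w"
    have pJ: "p \<in> gm_sum Q" unfolding p_def using yQ by (rule single_entry_gm_sum)
    have qJ: "q \<in> gm_sum Q" unfolding q_def using less.prems(1) pJ by (rule gm_sum_diff)
    have pC: "p \<in> gm_carrier C" and qC: "q \<in> gm_carrier C" and zC: "z \<in> gm_carrier C"
      using pJ qJ gm_sum_subset_carrier wC unfolding z_def by auto
    have pz: "gm_mult m p z = single_entry s s (m s t s y w)"
      unfolding p_def z_def using yC wC by (rule single_entry_mult_single_entry)
    have pzp: "gm_mult m (gm_mult m p z) p = p"
      unfolding pz unfolding p_def using yC wC yw by (simp add: single_entry_mult_single_entry)
    have q_col_t: "q i t = 0" for i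
      unfolding q_def p_def y_def using less.prems(2) nonzero_entry_in_rows_cols(1)[of x i t]
      by (auto simp: single_entry_apply)
    have qz: "gm_mult m q z = 0"
      unfolding z_def using wC qC by (simp add: mult_single_entry q_col_t fun_eq_iff)
    define u where "u = q - gm_mult m (gm_mult m p z) q"
    have uJ: "u \<in> gm_sum Q"
      unfolding u_def using qJ gm_sum_mult_left[OF A.mul_mem[OF pC zC] qJ] by (rule gm_sum_diff)
    have "u i j \<noteq> 0 \<Longrightarrow> q i j \<noteq> 0" for i j
      unfolding u_def pz using yC wC qC by (auto simp: single_entry_mult split: if_splits)
    moreover have "q i j \<noteq> 0 \<Longrightarrow> (i, j) \<in> matrix_supp x - {(s, t)}" for i j
      unfolding q_def p_def y_def matrix_supp_def by (auto simp: single_entry_apply split: if_splits)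
    ultimately have supp_u: "matrix_supp u \<subseteq> matrix_supp x - {(s, t)}"
      unfolding matrix_supp_def by blast
    have fin: "finite (matrix_supp x)" using less.prems(1) unfolding gm_sum_iff by blast
    then have "card (matrix_supp u) \<le> card (matrix_supp x - {(s, t)})"
      using supp_u by (intro card_mono) simp_all
    also have "\<dots> < card (matrix_supp x)"
      using fin xst by (intro card_Diff1_less) (simp_all add: matrix_supp_def)
    finally have "card (matrix_supp u) < card (matrix_supp x)" .
    moreover have "matrix_rows u \<subseteq> {s}"
      using supp_u less.prems(2) unfolding matrix_rows_def by blast
    ultimately have "A.regular u" using less.hyps uJ by blast
    then have "A.regular (p + q)"
      unfolding u_def using pC qC zC pzp qz by (rule A.regular_add_if_right_annihilates[rotated 5])
    then show ?thesis unfolding q_def by simp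
  qed
qed

text \<open>Split off the row \<open>r\<close> of \<open>x\<close> with index \<open>s\<close>; an inner inverse of \<open>r\<close> may be taken
  with column support in \<open>s\<close>, and then it kills the remaining rows from the left.\<close>
lemma regular_if_in_gm_sum: "x \<in> gm_sum Q \<Longrightarrow> A.regular x"
proof (induction "card (matrix_rows x)" arbitrary: x rule: less_induct)
  case less
  show ?case
  proof (cases "x = 0")
    case True
    then show ?thesis using A.regular_zero by simp
  next
    case False
    then have "matrix_supp x \<noteq> {}" by (simp add: matrix_supp_empty_iff)
    then obtain s t where xst: "x s t \<noteq> 0" unfolding matrix_supp_def by auto
    define r where "r = (\<lambda>i j. if i = s then x i j else 0)"
    define q where "q = x - r"
    have rJ: "r \<in> gm_sum Q" unfolding r_def using less.prems by (rule gm_sum_restrict_family) simp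
    have qJ: "q \<in> gm_sum Q" unfolding q_def using less.prems rJ by (rule gm_sum_diff)
    have rC: "r \<in> gm_carrier C" and qC: "q \<in> gm_carrier C"
      using rJ qJ gm_sum_subset_carrier by auto
    have "matrix_rows r \<subseteq> {s}"
      unfolding r_def matrix_rows_def matrix_supp_def by (auto split: if_splits)
    with rJ have "A.regular r" by (rule regular_if_in_gm_sum_row)
    then obtain z where zC: "z \<in> gm_carrier C" and rzr: "r = gm_mult m (gm_mult m r z) r"
      unfolding A.regular_def by blast
    define z' where "z' = (\<lambda>i j. if j = s then z i j else 0)"
    have z'C: "z' \<in> gm_carrier C"
      unfolding z'_def gm_carrier_eq_gm_sum using zC[unfolded gm_carrier_eq_gm_sum]
      by (rule gm_sum_restrict[rotated]) simp_all
    have r_rows: "r k j = 0" if "k \<noteq> s" for k j using that unfolding r_def by simp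
    have "gm_mult m z' r = gm_mult m z r"
      using z'C zC rC by (simp add: fun_eq_iff gm_mult_if_row_supported[OF _ _ r_rows] z'_def)
    then have rz'r: "gm_mult m (gm_mult m r z') r = r"
      using rzr rC zC z'C by (simp add: A.mul_assoc)
    have z'q: "gm_mult m z' q = 0"
      using z'C zC qC by (simp add: fun_eq_iff gm_mult_if_col_supported[where s = s] z'_def q_def r_def)
    define u where "u = q - gm_mult m (gm_mult m q z') r"
    have uJ: "u \<in> gm_sum Q"
      unfolding u_def using qJ gm_sum_mult_right[OF gm_sum_mult_right[OF qJ z'C] rC] by (rule gm_sum_diff)
    have "matrix_rows u \<subseteq> matrix_rows q"
      using matrix_rows_diff_subset[of q] matrix_rows_gm_mult_subset[OF A.mul_mem[OF qC z'C]]
        matrix_rows_gm_mult_subset[OF qC] unfolding u_def by blast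
    also have "\<dots> \<subseteq> matrix_rows x - {s}"
      unfolding q_def r_def matrix_rows_def matrix_supp_def by (auto split: if_splits)
    finally have rows_u: "matrix_rows u \<subseteq> matrix_rows x - {s}" .
    have fin: "finite (matrix_rows x)"
      using less.prems finite_rows_cols(1) unfolding gm_sum_iff by blast
    then have "card (matrix_rows u) \<le> card (matrix_rows x - {s})"
      using rows_u by (intro card_mono) simp_all
    also have "\<dots> < card (matrix_rows x)"
      using fin nonzero_entry_in_rows_cols(1)[of x s t, OF xst] by (rule card_Diff1_less)
    finally have "A.regular u" using less.hyps uJ by blast
    then have "A.regular (r + q)"
      unfolding u_def using rC qC z'C rz'r z'q by (rule A.regular_add_if_left_annihilates[rotated 5])
    then show ?thesis unfolding q_def by simp
  qed
qed

end

context gen_matrix_ring_nzd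
begin

lemma regular_gm_ideal_family_sandwich_family:
  assumes B: "gamma_ideal C m k j B" "\<forall>b\<in>B. gamma_regular C m k j b"
  shows "regular_gm_ideal_family C m (sandwich_family k j B)"
proof unfold_locales
  have B_zero: "0 \<in> B" and B_diff: "\<And>x y. x \<in> B \<Longrightarrow> y \<in> B \<Longrightarrow> x - y \<in> B"
    using B(1) unfolding gamma_ideal_def by blast+
  fix r s t x y a
  show "sandwich_family k j B s t \<subseteq> C s t" unfolding sandwich_family_def by blast
  show "0 \<in> sandwich_family k j B s t" unfolding sandwich_family_def using B_zero by simp
  show "x \<in> sandwich_family k j B s t \<Longrightarrow> y \<in> sandwich_family k j B s t \<Longrightarrow>
      x - y \<in> sandwich_family k j B s t"
    unfolding sandwich_family_def by (simp add: B_diff mult_diff_left mult_diff_right)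
  show "y \<in> sandwich_family k j B s t \<Longrightarrow> gamma_regular C m s t y"
    unfolding sandwich_family_def using B(2) by (intro gamma_regular_if_sandwiches_regular) auto
  show "m r s t a y \<in> sandwich_family k j B r t"
    if "a \<in> C r s" "y \<in> sandwich_family k j B s t"
  proof -
    have "m k t j (m k s t (m k r s u a) y) v \<in> B" if "u \<in> C k r" "v \<in> C t j" for u v
      using \<open>a \<in> C r s\<close> \<open>y \<in> _\<close> that unfolding sandwich_family_def by simp
    then show ?thesis using that unfolding sandwich_family_def by (simp add: mult_assoc)
  qed
  show "m r s t y a \<in> sandwich_family k j B r t"
    if "y \<in> sandwich_family k j B r s" "a \<in> C s t"
  proof -
    have "m k s j (m k r s u y) (m s t j a v) \<in> B" if "u \<in> C k r" "v \<in> C t j" for u v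
      using \<open>a \<in> C s t\<close> \<open>y \<in> _\<close> that unfolding sandwich_family_def by simp
    then show ?thesis using that unfolding sandwich_family_def by (simp add: mult_assoc)
  qed
qed

lemma single_entry_mem_regular_radical:
  assumes "b \<in> rn_gamma C m k j"
  shows "single_entry k j b \<in> A.regular_radical"
proof -
  obtain B where B: "gamma_ideal C m k j B" "\<forall>b\<in>B. gamma_regular C m k j b" and b: "b \<in> B"
    using assms unfolding rn_gamma_def by blast
  interpret Q: regular_gm_ideal_family C m "sandwich_family k j B"
    using B by (rule regular_gm_ideal_family_sandwich_family)
  have "single_entry k j b \<in> gm_sum (sandwich_family k j B)"
    using mem_sandwich_family_self[OF B b] by (rule Q.single_entry_gm_sum)
  then show ?thesis
    unfolding A.regular_radical_def using Q.ideal_gm_sum Q.regular_if_in_gm_sum by blast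
qed

lemma regular_radical_eq_gm_sum_rn_gamma: "A.regular_radical = gm_sum (rn_gamma C m)"
proof
  show "A.regular_radical \<subseteq> gm_sum (rn_gamma C m)"
  proof
    fix x assume x: "x \<in> A.regular_radical"
    then have "x \<in> gm_carrier C" using A.ideal_regular_radical unfolding A.ideal_def by blast
    then show "x \<in> gm_sum (rn_gamma C m)"
      unfolding gm_sum_iff using finite_supp_carrier regular_radical_entry_mem[OF x] by blast
  qed
  show "gm_sum (rn_gamma C m) \<subseteq> A.regular_radical"
  proof
    fix x assume x: "x \<in> gm_sum (rn_gamma C m)"
    have "x \<in> gm_carrier C"
      using x rn_gamma_subset[of C m] unfolding gm_sum_iff gm_carrier_iff by blast
    moreover have "single_entry i j (x i j) \<in> A.regular_radical" for i j
      using x unfolding gm_sum_iff by (simp add: single_entry_mem_regular_radical)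
    ultimately show "x \<in> A.regular_radical"
      by (rule ideal_mem_if_single_entries_mem[OF A.ideal_regular_radical])
  qed
qed

end

lemma gm_part_eq_self: "is_gm_ideal C m X \<Longrightarrow> gm_part C m X = X"
  unfolding gm_part_def by blast

theorem theorem2p3:
  fixes C :: "'i \<Rightarrow> 'i \<Rightarrow> 'a::ab_group_add set"
    and m :: "'i \<Rightarrow> 'i \<Rightarrow> 'i \<Rightarrow> 'a \<Rightarrow> 'a \<Rightarrow> 'a"
  assumes "gm_ring C m"
    and "has_gm_nonzero_divisors C m"
  shows "rn_ring C m = gm_part C m (rn_ring C m)
       \<and> gm_part C m (rn_ring C m) = gm_sum (\<lambda>i j. rn_gamma C m i j)"
proof -
  interpret gen_matrix_ring_nzd C m
    using assms by unfold_locales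
  have rn_eq: "rn_ring C m = gm_sum (rn_gamma C m)"
    unfolding rn_ring_eq_regular_radical by (rule regular_radical_eq_gm_sum_rn_gamma)
  have "is_gm_ideal C m (rn_ring C m)"
    unfolding is_gm_ideal_def gm_ideal_of_eq_ideal rn_ring_eq_regular_radical
    using A.ideal_regular_radical regular_radical_eq_gm_sum_rn_gamma rn_gamma_subset[of C m] by blast
  then have "gm_part C m (rn_ring C m) = rn_ring C m" by (rule gm_part_eq_self)
  with rn_eq show ?thesis by simp
qed

end
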